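(* Let $\Lambda=K\mathcal{Q}/I$ be a finite-dimensional algebra over a field $K$ as in the context, let $A\geqslant1$ and let $\tilde{\Lambda}=\tilde{\Lambda}_A$ be its stretched algebra. Let $w$ be a vertex of $\tilde{\mathcal{Q}}_A$ not in $\mathcal{Q}_0$, let $v=\mathfrak{o}(\tilde{p}_w)$ and $v'=\mathfrak{t}(\tilde{q}_w)$, and let $\tilde\lambda\in\tilde{\Lambda}$. Then: (1) if $0\neq\tilde\lambda v\in\tilde{\Lambda}v$, then $\tilde\lambda\tilde{p}_w\neq0$ in $\tilde{\Lambda}$; (2) if $0\neq v'\tilde\lambda\in v'\tilde{\Lambda}$, then $\tilde{q}_w\tilde\lambda\neq0$ in $\tilde{\Lambda}$.
   Context: Conventions: $\mathcal{Q}$ is a finite quiver with vertex set $\mathcal{Q}_0$; $\mathfrak{o}(\alpha)$, $\mathfrak{t}(\alpha)$ denote start and end of an arrow or path; paths are written left to right. An element $x\in K\mathcal{Q}$ is uniform if $x=vx=xv'$ for vertices $v,v'$. $\Lambda=K\mathcal{Q}/I$ is finite-dimensional with $I$ an admissible ideal generated by a minimal set $\{g^2_1,\dots,g^2_m\}$ of uniform elements. Stretched algebra: for $A\geqslant1$, the quiver $\tilde{\mathcal{Q}}_A$ has all vertices of $\mathcal{Q}$ plus, for each arrow $\alpha$ of $\mathcal{Q}$, new vertices $w_1,\dots,w_{A-1}$; each arrow $\alpha$ is replaced by arrows $\alpha_1,\dots,\alpha_A$ with $\mathfrak{o}(\alpha_1)=\mathfrak{o}(\alpha)$, $\mathfrak{t}(\alpha_j)=\mathfrak{o}(\alpha_{j+1})=w_j$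 ($1\le j\le A-1$), $\mathfrak{t}(\alpha_A)=\mathfrak{t}(\alpha)$, and the only arrows incident with $w_j$ are $\alpha_j,\alpha_{j+1}$. $\theta^*:K\mathcal{Q}\to K\tilde{\mathcal{Q}}_A$ is the algebra homomorphism fixing vertices and sending $\alpha\mapsto\alpha_1\cdots\alpha_A$; $\tilde{I}_A$ is the ideal generated by $\theta^*(g^2_1),\dots,\theta^*(g^2_m)$; $\tilde{\Lambda}_A=K\tilde{\mathcal{Q}}_A/\tilde{I}_A$. For a new vertex $w=w_i$ on the path replacing the arrow $\alpha$, $\tilde{p}_w=\alpha_1\cdots\alpha_i$ (the unique shortest path from a vertex of $\mathcal{Q}_0$ to $w$) and $\tilde{q}_w=\alpha_{i+1}\cdots\alpha_A$ (the unique shortest path from $w$ to a vertex of $\mathcal{Q}_0$), viewed in $\tilde{\Lambda}$; thus $\mathfrak{o}(\tilde{p}_w)=\mathfrak{o}(\alpha)$, $\mathfrak{t}(\tilde{q}_w)=\mathfrak{t}(\alpha)$. *)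

theory Defs
  imports Main
begin

record ('v, 'e) quiver =
  verts :: "'v set"
  arrs  :: "'e set"
  src   :: "'e \<Rightarrow> 'v"
  tgt   :: "'e \<Rightarrow> 'v"

definition finite_quiver :: "('v, 'e) quiver \<Rightarrow> bool" where
  "finite_quiver Q \<longleftrightarrow> finite (verts Q) \<and> finite (arrs Q) \<and>
     (\<forall>a\<in>arrs Q. src Q a \<in> verts Q \<and> tgt Q a \<in> verts Q)"

text \<open>A path is a start vertex together with a (possibly empty) list of arrows,
  composed left to right; the empty list gives the trivial path at the vertex.\<close>
type_synonym ('v, 'e) qpath = "'v \<times> 'e list"

definition is_path :: "('v, 'e) quiver \<Rightarrow> ('v, 'e) qpath \<Rightarrow> bool" where
  "is_path Q p \<longleftrightarrow> fst p \<in> verts Q \<and> set (snd p) \<subseteq> arrs Q \<and>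
     (snd p \<noteq> [] \<longrightarrow> src Q (hd (snd p)) = fst p) \<and>
     (\<forall>i. Suc i < length (snd p) \<longrightarrow> tgt Q (snd p ! i) = src Q (snd p ! Suc i))"

definition path_end :: "('v, 'e) quiver \<Rightarrow> ('v, 'e) qpath \<Rightarrow> 'v" where
  "path_end Q p = (if snd p = [] then fst p else tgt Q (last (snd p)))"

type_synonym ('v, 'e, 'k) pelem = "('v, 'e) qpath \<Rightarrow> 'k"

definition pa_carrier :: "('v, 'e) quiver \<Rightarrow> ('v, 'e, 'k::field) pelem set" where
  "pa_carrier Q = {x. finite {p. x p \<noteq> 0} \<and> (\<forall>p. x p \<noteq> 0 \<longrightarrow> is_path Q p)}"

definition pa_add :: "('v, 'e, 'k::field) pelem \<Rightarrow> ('v, 'e, 'k) pelem \<Rightarrow> ('v, 'e, 'k) pelem" where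
  "pa_add x y = (\<lambda>p. x p + y p)"

definition pa_smult :: "'k::field \<Rightarrow> ('v, 'e, 'k) pelem \<Rightarrow> ('v, 'e, 'k) pelem" where
  "pa_smult c x = (\<lambda>p. c * x p)"

definition pa_zero :: "('v, 'e, 'k::field) pelem" where
  "pa_zero = (\<lambda>p. 0)"

text \<open>Multiplication: concatenation of paths (left to right), zero if not composable.\<close>
definition pa_mult :: "('v, 'e) quiver \<Rightarrow> ('v, 'e, 'k::field) pelem \<Rightarrow> ('v, 'e, 'k) pelem
    \<Rightarrow> ('v, 'e, 'k) pelem" where
  "pa_mult Q x y = (\<lambda>p. \<Sum>i\<le>length (snd p).
      x (fst p, take i (snd p)) * y (path_end Q (fst p, take i (snd p)), drop i (snd p)))"

definition pa_path :: "('v, 'e) qpath \<Rightarrow> ('v, 'e, 'k::field) pelem" where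
  "pa_path p = (\<lambda>q. if q = p then 1 else 0)"

definition pa_vtx :: "'v \<Rightarrow> ('v, 'e, 'k::field) pelem" where
  "pa_vtx v = pa_path (v, [])"

inductive_set gen_ideal :: "('v, 'e) quiver \<Rightarrow> ('v, 'e, 'k::field) pelem set
    \<Rightarrow> ('v, 'e, 'k) pelem set" for Q S where
  gen: "s \<in> S \<Longrightarrow> s \<in> gen_ideal Q S"
| zero: "pa_zero \<in> gen_ideal Q S"
| add: "a \<in> gen_ideal Q S \<Longrightarrow> b \<in> gen_ideal Q S \<Longrightarrow> pa_add a b \<in> gen_ideal Q S"
| smult: "a \<in> gen_ideal Q S \<Longrightarrow> pa_smult c a \<in> gen_ideal Q S"
| mult: "a \<in> gen_ideal Q S \<Longrightarrow> x \<in> pa_carrier Q \<Longrightarrow> y \<in> pa_carrier Q \<Longrightarrow>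
          pa_mult Q (pa_mult Q x a) y \<in> gen_ideal Q S"

definition uniform :: "('v, 'e) quiver \<Rightarrow> ('v, 'e, 'k::field) pelem \<Rightarrow> bool" where
  "uniform Q x \<longleftrightarrow> (\<exists>v\<in>verts Q. \<exists>v'\<in>verts Q.
      x = pa_mult Q (pa_vtx v) x \<and> x = pa_mult Q x (pa_vtx v'))"

text \<open>Admissible: R^N \<subseteq> I \<subseteq> R^2 for some N \<ge> 2, R the arrow ideal.\<close>
definition admissible :: "('v, 'e) quiver \<Rightarrow> ('v, 'e, 'k::field) pelem set \<Rightarrow> bool" where
  "admissible Q I \<longleftrightarrow> I \<subseteq> pa_carrier Q \<and>
     (\<exists>N\<ge>2. \<forall>p. is_path Q p \<and> length (snd p) \<ge> N \<longrightarrow> pa_path p \<in> I) \<and>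
     (\<forall>x\<in>I. \<forall>p. length (snd p) < 2 \<longrightarrow> x p = 0)"

definition fin_dim_quot :: "('v, 'e) quiver \<Rightarrow> ('v, 'e, 'k::field) pelem set \<Rightarrow> bool" where
  "fin_dim_quot Q I \<longleftrightarrow> (\<exists>F. finite F \<and> F \<subseteq> pa_carrier Q \<and>
     (\<forall>x\<in>pa_carrier Q. \<exists>c. (\<lambda>p. x p - (\<Sum>f\<in>F. c f * f p)) \<in> I))"

definition minimal_uniform_gens :: "('v, 'e) quiver \<Rightarrow> ('v, 'e, 'k::field) pelem set
    \<Rightarrow> ('v, 'e, 'k) pelem set \<Rightarrow> bool" where
  "minimal_uniform_gens Q G I \<longleftrightarrow> finite G \<and> G \<subseteq> pa_carrier Q \<and>
     (\<forall>g\<in>G. uniform Q g) \<and> I = gen_ideal Q G \<and> (\<forall>g\<in>G. gen_ideal Q (G - {g}) \<noteq> I)"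

datatype ('v, 'e) svert = Old 'v | New 'e nat

text \<open>Arrow \<alpha> is replaced by arrows (\<alpha>,1),...,(\<alpha>,A); New \<alpha> j is w_j on the path replacing \<alpha>.\<close>
definition stretched_quiver :: "('v, 'e) quiver \<Rightarrow> nat \<Rightarrow> (('v, 'e) svert, 'e \<times> nat) quiver" where
  "stretched_quiver Q A =
     \<lparr> verts = Old ` verts Q \<union> {New a j | a j. a \<in> arrs Q \<and> 1 \<le> j \<and> j \<le> A - 1},
       arrs = {(a, j) | a j. a \<in> arrs Q \<and> 1 \<le> j \<and> j \<le> A},
       src = (\<lambda>(a, j). if j = 1 then Old (src Q a) else New a (j - 1)),
       tgt = (\<lambda>(a, j). if j = A then Old (tgt Q a) else New a j) \<rparr>"

definition stretch_arr :: "nat \<Rightarrow> 'e \<Rightarrow> ('e \<times> nat) list" where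
  "stretch_arr A a = map (\<lambda>j. (a, j)) [1..<A+1]"

definition stretch_path :: "nat \<Rightarrow> ('v, 'e) qpath \<Rightarrow> (('v, 'e) svert, 'e \<times> nat) qpath" where
  "stretch_path A p = (Old (fst p), concat (map (stretch_arr A) (snd p)))"

text \<open>theta*: the algebra homomorphism fixing vertices and sending \<alpha> to \<alpha>_1...\<alpha>_A,
  written out on the path basis.\<close>
definition theta :: "('v, 'e) quiver \<Rightarrow> nat \<Rightarrow> ('v, 'e, 'k::field) pelem
    \<Rightarrow> (('v, 'e) svert, 'e \<times> nat, 'k) pelem" where
  "theta Q A x = (\<lambda>q. \<Sum>p\<in>{p. is_path Q p \<and> stretch_path A p = q}. x p)"

definition stretched_ideal :: "('v, 'e) quiver \<Rightarrow> nat \<Rightarrow> ('v, 'e, 'k::field) pelem set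
    \<Rightarrow> (('v, 'e) svert, 'e \<times> nat, 'k) pelem set" where
  "stretched_ideal Q A G = gen_ideal (stretched_quiver Q A) (theta Q A ` G)"

fun ptil :: "('v, 'e) quiver \<Rightarrow> nat \<Rightarrow> ('v, 'e) svert \<Rightarrow> (('v, 'e) svert, 'e \<times> nat) qpath" where
  "ptil Q A (New a i) = (Old (src Q a), map (\<lambda>j. (a, j)) [1..<i+1])"
| "ptil Q A (Old v) = (Old v, [])"

fun qtil :: "('v, 'e) quiver \<Rightarrow> nat \<Rightarrow> ('v, 'e) svert \<Rightarrow> (('v, 'e) svert, 'e \<times> nat) qpath" where
  "qtil Q A (New a i) = (New a i, map (\<lambda>j. (a, j)) [i+1..<A+1])"
| "qtil Q A (Old v) = (Old v, [])"

end

theory Submission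
  imports Defs
begin

(*
  Divide on the right by the arrow word of p~_w and on the left by the path q~_w: the coefficient
  of a path r in the quotient is that of r p~_w (resp. q~_w r). Both divisions preserve the
  stretched ideal. They kill every generator theta*(g), since a stretched path starts at an old
  vertex and ends with an arrow alpha_A, while p~_w ends with alpha_i, i < A, and q~_w starts at
  the new vertex w. On a product x a y with a in the ideal they produce, besides products with a,
  only quotients of a by shorter prefixes of p~_w (resp. by q~_w' for the vertices w' further
  along the same arrow), because elements of the ideal have no paths of length less than A.
  Finally, lambda p~_w divided by p~_w is lambda v, and q~_w lambda divided by q~_w is v' lambda.
*)

lemma sum_atMost_split_after:
  "(\<Sum>k\<le>n + m. f k) = (\<Sum>k\<le>n. f k) + (\<Sum>k<m. f (n + Suc k))"
  for f :: "nat \<Rightarrow> 'a::comm_monoid_add"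
  by (induction m) (auto simp: add.assoc)

lemma sum_atMost_split_before:
  "(\<Sum>k\<le>n + m. f k) = (\<Sum>k<n. f k) + (\<Sum>k\<le>m. f (n + k))"
  for f :: "nat \<Rightarrow> 'a::comm_monoid_add"
  by (induction m) (auto simp: add.assoc lessThan_Suc_atMost[symmetric])

lemma last_take_Suc: "m < length t \<Longrightarrow> last (take (Suc m) t) = t ! m"
  by (subst last_conv_nth) (auto simp: min_def intro: arg_cong[where f="(!) t"])

lemma path_end_append: "path_end Q (s, u @ l) = path_end Q (path_end Q (s, u), l)"
  by (simp add: path_end_def)

lemma is_path_appendD1:
  assumes "is_path Q (s, u @ l)"
  shows "is_path Q (s, u)"
proof -
  have "tgt Q (u ! i) = src Q (u ! Suc i)" if "Suc i < length u" for i
  proof -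
    have "tgt Q ((u @ l) ! i) = src Q ((u @ l) ! Suc i)"
      using assms that by (auto simp: is_path_def)
    then show ?thesis
      using that by (simp add: nth_append)
  qed
  then show ?thesis
    using assms by (auto simp: is_path_def)
qed

lemma is_path_appendD2:
  assumes path: "is_path Q (s, u @ l)" and end_in: "path_end Q (s, u) \<in> verts Q"
  shows "is_path Q (path_end Q (s, u), l)"
proof (cases "u = [] \<or> l = []")
  case True
  then show ?thesis
    using path end_in by (auto simp: is_path_def path_end_def)
next
  case False
  have link: "tgt Q ((u @ l) ! i) = src Q ((u @ l) ! Suc i)" if "Suc i < length u + length l" for i
    using path that by (auto simp: is_path_def)
  have "src Q (hd l) = tgt Q (last u)"
    using link[of "length u - 1"] False
    by (cases u rule: rev_cases) (auto simp: nth_append hd_conv_nth)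
  moreover have "tgt Q (l ! i) = src Q (l ! Suc i)" if "Suc i < length l" for i
    using link[of "length u + i"] that by (simp add: nth_append)
  ultimately show ?thesis
    using path end_in False by (auto simp: is_path_def path_end_def)
qed

lemma path_end_in_verts:
  "(\<forall>a\<in>arrs Q. tgt Q a \<in> verts Q) \<Longrightarrow> is_path Q p \<Longrightarrow> path_end Q p \<in> verts Q"
  unfolding path_end_def is_path_def by (metis last_in_set subset_iff)

lemma pa_mult_nonzeroD:
  "pa_mult Q x y p \<noteq> 0 \<Longrightarrow> \<exists>k\<le>length (snd p). x (fst p, take k (snd p)) \<noteq> 0
     \<and> y (path_end Q (fst p, take k (snd p)), drop k (snd p)) \<noteq> 0"
  unfolding pa_mult_def
  by (metis (no_types, lifting) atMost_iff mult_not_zero sum.not_neutral_contains_not_neutral)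

section \<open>Division by paths\<close>

text \<open>No vertex check is needed on the right, where r keeps its start vertex; on the left it
  keeps the support finite.\<close>

definition pa_rquot :: "'e list \<Rightarrow> ('v, 'e, 'k::field) pelem \<Rightarrow> ('v, 'e, 'k) pelem" where
  "pa_rquot t f = (\<lambda>r. f (fst r, snd r @ t))"

definition pa_lquot :: "('v, 'e) quiver \<Rightarrow> ('v, 'e) qpath \<Rightarrow> ('v, 'e, 'k::field) pelem
    \<Rightarrow> ('v, 'e, 'k) pelem" where
  "pa_lquot Q p f = (\<lambda>r. if fst r = path_end Q p then f (fst p, snd p @ snd r) else 0)"

lemma pa_mult_append_right:
  "pa_mult Q x y (s, l @ t) = pa_mult Q x (pa_rquot t y) (s, l)
     + (\<Sum>m<length t. x (s, l @ take (Suc m) t) * y (tgt Q (t ! m), drop (Suc m) t))"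
proof -
  let ?term = "\<lambda>k. x (s, take k (l @ t)) * y (path_end Q (s, take k (l @ t)), drop k (l @ t))"
  have "pa_mult Q x y (s, l @ t) = (\<Sum>k\<le>length l + length t. ?term k)"
    by (simp add: pa_mult_def)
  also have "\<dots> = (\<Sum>k\<le>length l. ?term k) + (\<Sum>m<length t. ?term (length l + Suc m))"
    by (rule sum_atMost_split_after)
  also have "(\<Sum>k\<le>length l. ?term k) = pa_mult Q x (pa_rquot t y) (s, l)"
    unfolding pa_mult_def pa_rquot_def by (rule sum.cong) auto
  also have "(\<Sum>m<length t. ?term (length l + Suc m))
      = (\<Sum>m<length t. x (s, l @ take (Suc m) t) * y (tgt Q (t ! m), drop (Suc m) t))"
    by (rule sum.cong) (auto simp: path_end_def last_take_Suc last_append)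
  finally show ?thesis .
qed

lemma pa_mult_append_left:
  "pa_mult Q x y (s, u @ l)
     = (\<Sum>k<length u. x (s, take k u) * y (path_end Q (s, take k u), drop k u @ l))
       + pa_mult Q (pa_lquot Q (s, u) x) y (path_end Q (s, u), l)"
proof -
  let ?term = "\<lambda>k. x (s, take k (u @ l)) * y (path_end Q (s, take k (u @ l)), drop k (u @ l))"
  have "pa_mult Q x y (s, u @ l) = (\<Sum>k\<le>length u + length l. ?term k)"
    by (simp add: pa_mult_def)
  also have "\<dots> = (\<Sum>k<length u. ?term k) + (\<Sum>k\<le>length l. ?term (length u + k))"
    by (rule sum_atMost_split_before)
  also have "(\<Sum>k<length u. ?term k)
      = (\<Sum>k<length u. x (s, take k u) * y (path_end Q (s, take k u), drop k u @ l))"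
    by (rule sum.cong) auto
  also have "(\<Sum>k\<le>length l. ?term (length u + k))
      = pa_mult Q (pa_lquot Q (s, u) x) y (path_end Q (s, u), l)"
    unfolding pa_mult_def pa_lquot_def by (rule sum.cong) (auto simp: path_end_append)
  finally show ?thesis .
qed

lemma pa_rquot_pa_mult:
  "pa_rquot t (pa_mult Q x y) = pa_add (pa_mult Q x (pa_rquot t y))
     (\<lambda>r. \<Sum>m<length t. y (tgt Q (t ! m), drop (Suc m) t) * pa_rquot (take (Suc m) t) x r)"
  using pa_mult_append_right[of Q x y]
  by (auto simp: pa_rquot_def pa_add_def mult.commute)

lemma pa_rquot_pa_mult_short:
  assumes "\<forall>q. length (snd q) < length t \<longrightarrow> y q = 0"
  shows "pa_rquot t (pa_mult Q x y) = pa_mult Q x (pa_rquot t y)"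
  using assms by (simp add: pa_rquot_pa_mult pa_add_def)

lemma pa_lquot_pa_mult:
  "pa_lquot Q p (pa_mult Q x y) = pa_add (pa_mult Q (pa_lquot Q p x) y)
     (\<lambda>r. \<Sum>k<length (snd p). x (fst p, take k (snd p))
        * pa_lquot Q (path_end Q (fst p, take k (snd p)), drop k (snd p)) y r)"
  (is "?L = pa_add ?M ?T")
proof
  fix r :: "('a, 'b) qpath"
  obtain s u where p: "p = (s, u)" by fastforce
  obtain v l where r: "r = (v, l)" by fastforce
  have end_suffix: "path_end Q (path_end Q (s, take k u), drop k u) = path_end Q (s, u)" for k
    by (metis append_take_drop_id path_end_append)
  show "?L r = pa_add ?M ?T r"
  proof (cases "v = path_end Q (s, u)")
    case True
    have "?L r = pa_mult Q x y (s, u @ l)"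
      by (simp add: p r True pa_lquot_def)
    also have "\<dots> = (\<Sum>k<length u. x (s, take k u) * y (path_end Q (s, take k u), drop k u @ l))
       + ?M r"
      unfolding pa_mult_append_left p r True ..
    also have "(\<Sum>k<length u. x (s, take k u) * y (path_end Q (s, take k u), drop k u @ l)) = ?T r"
      by (simp add: p r True pa_lquot_def end_suffix)
    finally show ?thesis
      by (simp add: pa_add_def)
  next
    case False
    then show ?thesis
      by (simp add: p r pa_lquot_def pa_add_def pa_mult_def end_suffix)
  qed
qed

lemma pa_lquot_pa_mult_short:
  assumes "\<forall>q. length (snd q) < length (snd p) \<longrightarrow> x q = 0"
  shows "pa_lquot Q p (pa_mult Q x y) = pa_mult Q (pa_lquot Q p x) y"
  using assms by (simp add: pa_lquot_pa_mult pa_add_def)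

lemma pa_rquot_mult_pa_path: "pa_rquot t (pa_mult Q x (pa_path (s, t))) = pa_mult Q x (pa_vtx s)"
proof -
  have quot_path: "pa_rquot t (pa_path (s, t)) = (pa_vtx s :: ('a, 'b, 'c) pelem)"
    by (auto simp: pa_rquot_def pa_path_def pa_vtx_def prod_eq_iff)
  have "(pa_path (s, t) :: ('a, 'b, 'c) pelem) (tgt Q (t ! m), drop (Suc m) t) = 0"
    if "m < length t" for m
  proof -
    have "length (drop (Suc m) t) < length t"
      using that by simp
    then have "drop (Suc m) t \<noteq> t"
      by (metis less_not_refl)
    then show ?thesis
      by (simp add: pa_path_def)
  qed
  then show ?thesis
    by (simp add: pa_rquot_pa_mult quot_path pa_add_def)
qed

lemma pa_lquot_pa_path_mult:
  "pa_lquot Q p (pa_mult Q (pa_path p) y) = pa_mult Q (pa_vtx (path_end Q p)) y"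
proof -
  have quot_path: "pa_lquot Q p (pa_path p) = (pa_vtx (path_end Q p) :: ('a, 'b, 'c) pelem)"
    by (auto simp: pa_lquot_def pa_path_def pa_vtx_def prod_eq_iff)
  have "(pa_path p :: ('a, 'b, 'c) pelem) (fst p, take k (snd p)) = 0" if "k < length (snd p)" for k
    using that by (auto simp: pa_path_def prod_eq_iff)
  then show ?thesis
    by (simp add: pa_lquot_pa_mult quot_path pa_add_def)
qed

lemma pa_rquot_carrier: "y \<in> pa_carrier Q \<Longrightarrow> pa_rquot t y \<in> pa_carrier Q"
proof -
  assume y: "y \<in> pa_carrier Q"
  have "{r. pa_rquot t y r \<noteq> 0} = (\<lambda>r. (fst r, snd r @ t)) -` {p. y p \<noteq> 0}"
    by (simp add: pa_rquot_def vimage_def)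
  moreover have "inj (\<lambda>r::('a, 'b) qpath. (fst r, snd r @ t))"
    by (rule injI) (simp add: prod_eq_iff)
  ultimately have "finite {r. pa_rquot t y r \<noteq> 0}"
    using y finite_vimageI by (fastforce simp: pa_carrier_def)
  moreover have "is_path Q r" if "pa_rquot t y r \<noteq> 0" for r
    using that y is_path_appendD1[of Q "fst r" "snd r" t]
    by (simp add: pa_rquot_def pa_carrier_def)
  ultimately show ?thesis
    by (simp add: pa_carrier_def)
qed

lemma pa_lquot_carrier:
  assumes y: "y \<in> pa_carrier Q" and end_in: "path_end Q p \<in> verts Q"
  shows "pa_lquot Q p y \<in> pa_carrier Q"
proof -
  let ?extend = "\<lambda>r::('a, 'b) qpath. (fst p, snd p @ snd r)"
  let ?supp = "{r. pa_lquot Q p y r \<noteq> 0}"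
  have "?extend ` ?supp \<subseteq> {q. y q \<noteq> 0}"
    by (auto simp: pa_lquot_def split: if_splits)
  moreover have "inj_on ?extend ?supp"
    by (auto simp: inj_on_def pa_lquot_def prod_eq_iff split: if_splits)
  ultimately have "finite ?supp"
    using y finite_subset finite_imageD by (fastforce simp: pa_carrier_def)
  moreover have "is_path Q r" if "pa_lquot Q p y r \<noteq> 0" for r
  proof -
    have "fst r = path_end Q p" "is_path Q (fst p, snd p @ snd r)"
      using that y by (auto simp: pa_lquot_def pa_carrier_def split: if_splits)
    then show ?thesis
      using is_path_appendD2[of Q "fst p" "snd p" "snd r"] end_in by (cases r) simp
  qed
  ultimately show ?thesis
    by (simp add: pa_carrier_def)
qed

section \<open>Ideals of the path algebra\<close>

definition pa_one :: "('v, 'e) quiver \<Rightarrow> ('v, 'e, 'k::field) pelem" where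
  "pa_one Q = (\<lambda>p. if snd p = [] \<and> fst p \<in> verts Q then 1 else 0)"

lemma pa_one_carrier:
  assumes "finite (verts Q)"
  shows "(pa_one Q :: ('v, 'e, 'k::field) pelem) \<in> pa_carrier Q"
proof -
  have "{p. pa_one Q p \<noteq> (0::'k)} \<subseteq> (\<lambda>v. (v, [])) ` verts Q"
    by (auto simp: pa_one_def)
  then have "finite {p. pa_one Q p \<noteq> (0::'k)}"
    using assms finite_subset by blast
  moreover have "is_path Q p" if "pa_one Q p \<noteq> (0::'k)" for p
    using that by (auto simp: pa_one_def is_path_def split: if_splits)
  ultimately show ?thesis
    by (simp add: pa_carrier_def)
qed

lemma pa_mult_one_right:
  assumes "\<forall>p. x p \<noteq> 0 \<longrightarrow> path_end Q p \<in> verts Q"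
  shows "pa_mult Q x (pa_one Q) = x"
proof
  fix p :: "('a, 'b) qpath"
  obtain s l where p: "p = (s, l)" by fastforce
  have "pa_mult Q x (pa_one Q) p
      = (\<Sum>k\<in>{length l}. x (s, take k l) * pa_one Q (path_end Q (s, take k l), drop k l))"
    unfolding pa_mult_def p fst_conv snd_conv
    by (rule sum.mono_neutral_right) (auto simp: pa_one_def)
  also have "\<dots> = x p"
    using assms by (auto simp: pa_one_def p)
  finally show "pa_mult Q x (pa_one Q) p = x p" .
qed

lemma pa_mult_one_left:
  assumes "\<forall>p. y p \<noteq> 0 \<longrightarrow> fst p \<in> verts Q"
  shows "pa_mult Q (pa_one Q) y = y"
proof
  fix p :: "('a, 'b) qpath"
  obtain s l where p: "p = (s, l)" by fastforce
  have "pa_mult Q (pa_one Q) y p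
      = (\<Sum>k\<in>{0}. pa_one Q (s, take k l) * y (path_end Q (s, take k l), drop k l))"
    unfolding pa_mult_def p fst_conv snd_conv
    by (rule sum.mono_neutral_right) (auto simp: pa_one_def)
  also have "\<dots> = y p"
    using assms by (auto simp: pa_one_def p path_end_def)
  finally show "pa_mult Q (pa_one Q) y p = y p" .
qed

lemma gen_ideal_sum:
  "(\<And>k. k < (n::nat) \<Longrightarrow> F k \<in> gen_ideal Q S) \<Longrightarrow> (\<lambda>r. \<Sum>k<n. c k * F k r) \<in> gen_ideal Q S"
proof (induction n)
  case 0
  then show ?case
    using gen_ideal.zero by (simp add: pa_zero_def)
next
  case (Suc n)
  then have "pa_add (\<lambda>r. \<Sum>k<n. c k * F k r) (pa_smult (c n) (F n)) \<in> gen_ideal Q S"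
    by (simp add: gen_ideal.add gen_ideal.smult)
  then show ?case
    by (simp add: pa_add_def pa_smult_def)
qed

lemma gen_ideal_mult_left:
  assumes "finite (verts Q)" and x: "x \<in> pa_carrier Q" and f: "f \<in> gen_ideal Q S"
    and ends: "\<forall>p. f p \<noteq> 0 \<longrightarrow> path_end Q p \<in> verts Q"
  shows "pa_mult Q x f \<in> gen_ideal Q S"
proof -
  have "path_end Q p \<in> verts Q" if nz: "pa_mult Q x f p \<noteq> 0" for p
  proof -
    obtain k where "f (path_end Q (fst p, take k (snd p)), drop k (snd p)) \<noteq> 0"
      using pa_mult_nonzeroD[OF nz] by blast
    then show ?thesis
      using ends path_end_append[of Q "fst p" "take k (snd p)" "drop k (snd p)"] by simp
  qed
  then have "pa_mult Q (pa_mult Q x f) (pa_one Q) = pa_mult Q x f"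
    by (blast intro: pa_mult_one_right)
  moreover have "pa_mult Q (pa_mult Q x f) (pa_one Q) \<in> gen_ideal Q S"
    using gen_ideal.mult[OF f x pa_one_carrier] assms(1) .
  ultimately show ?thesis
    by simp
qed

lemma gen_ideal_mult_right:
  assumes "finite (verts Q)" and y: "y \<in> pa_carrier Q" and f: "f \<in> gen_ideal Q S"
    and starts: "\<forall>p. f p \<noteq> 0 \<longrightarrow> fst p \<in> verts Q"
  shows "pa_mult Q f y \<in> gen_ideal Q S"
  using gen_ideal.mult[OF f pa_one_carrier y] pa_mult_one_left[OF starts] assms(1) by simp

lemma gen_ideal_vanishes_short:
  fixes Q :: "('v, 'e) quiver"
  assumes gens: "\<forall>s\<in>S. \<forall>q. length (snd q) < N \<longrightarrow> s q = 0"
    and "f \<in> gen_ideal Q S"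
  shows "\<forall>p. length (snd p) < N \<longrightarrow> f p = 0"
  using assms(2)
proof (induction rule: gen_ideal.induct)
  case (mult a x y)
  show ?case
  proof (intro allI impI)
    fix p :: "('v, 'e) qpath"
    assume short: "length (snd p) < N"
    show "pa_mult Q (pa_mult Q x a) y p = 0"
    proof (rule ccontr)
      assume "pa_mult Q (pa_mult Q x a) y p \<noteq> 0"
      then obtain k where "pa_mult Q x a (fst p, take k (snd p)) \<noteq> 0"
        using pa_mult_nonzeroD by blast
      then have "\<exists>j. a (path_end Q (fst p, take j (take k (snd p))), drop j (take k (snd p))) \<noteq> 0"
        using pa_mult_nonzeroD[of Q x a "(fst p, take k (snd p))"] by auto
      then obtain j
        where "a (path_end Q (fst p, take j (take k (snd p))), drop j (take k (snd p))) \<noteq> 0"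
        by blast
      moreover have "length (drop j (take k (snd p))) < N"
        using short by simp
      ultimately show False
        using mult.IH by (metis snd_conv)
    qed
  qed
qed (use gens in \<open>simp_all add: pa_zero_def pa_add_def pa_smult_def\<close>)

lemma gen_ideal_endpoints_in_verts:
  fixes Q :: "('v, 'e) quiver"
  assumes tgt_in: "\<forall>a\<in>arrs Q. tgt Q a \<in> verts Q"
    and gens: "\<forall>s\<in>S. \<forall>q. s q \<noteq> 0 \<longrightarrow> fst q \<in> verts Q \<and> path_end Q q \<in> verts Q"
    and "f \<in> gen_ideal Q S"
  shows "\<forall>p. f p \<noteq> 0 \<longrightarrow> fst p \<in> verts Q \<and> path_end Q p \<in> verts Q"
  using assms(3)
proof (induction rule: gen_ideal.induct)
  case (add a b)
  then show ?case
    by (auto simp: pa_add_def) (metis add.right_neutral)+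
next
  case (mult a x y)
  show ?case
  proof (intro allI impI)
    fix p :: "('v, 'e) qpath"
    assume "pa_mult Q (pa_mult Q x a) y p \<noteq> 0"
    then obtain k where k: "pa_mult Q x a (fst p, take k (snd p)) \<noteq> 0"
        "y (path_end Q (fst p, take k (snd p)), drop k (snd p)) \<noteq> 0"
      using pa_mult_nonzeroD by blast
    obtain j where "x (fst p, take j (take k (snd p))) \<noteq> 0"
      using pa_mult_nonzeroD[OF k(1)] by auto
    then have "fst p \<in> verts Q"
      using mult.hyps(2) by (auto simp: pa_carrier_def is_path_def)
    moreover have "path_end Q (path_end Q (fst p, take k (snd p)), drop k (snd p)) \<in> verts Q"
      using k(2) mult.hyps(3) path_end_in_verts[OF tgt_in] by (auto simp: pa_carrier_def)
    ultimately show "fst p \<in> verts Q \<and> path_end Q p \<in> verts Q"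
      using path_end_append[of Q "fst p" "take k (snd p)" "drop k (snd p)"] by simp
  qed
qed (use gens in \<open>auto simp: pa_zero_def pa_smult_def\<close>)

section \<open>The stretched algebra\<close>

lemma length_stretch_path: "length (snd (stretch_path A p)) = A * length (snd p)"
  by (induction "snd p" arbitrary: p) (auto simp: stretch_path_def stretch_arr_def)

lemma last_stretch_path:
  assumes "snd p \<noteq> []" and "1 \<le> A"
  shows "last (snd (stretch_path A p)) = (last (snd p), A)"
proof -
  obtain l b where "snd p = l @ [b]"
    using assms(1) by (metis append_butlast_last_id)
  then show ?thesis
    using assms(2) by (simp add: stretch_path_def stretch_arr_def)
qed

lemma theta_nonzeroD:
  "theta Q A g q \<noteq> 0 \<Longrightarrow> \<exists>p. is_path Q p \<and> stretch_path A p = q \<and> g p \<noteq> 0"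
  unfolding theta_def
  by (metis (mono_tags, lifting) mem_Collect_eq sum.not_neutral_contains_not_neutral)

lemma theta_vanishes_short:
  assumes "\<forall>v. g (v, []) = 0" and "length (snd q) < A"
  shows "theta Q A g q = 0"
proof (rule ccontr)
  assume "theta Q A g q \<noteq> 0"
  then obtain p where "stretch_path A p = q" "g p \<noteq> 0"
    using theta_nonzeroD by blast
  moreover from this have "snd p \<noteq> []"
    using assms(1) by (metis prod.collapse)
  ultimately show False
    using assms(2) length_stretch_path[of A p] by (simp add: Suc_le_eq)
qed

lemma theta_endpoints_in_verts:
  assumes "finite_quiver Q" and "1 \<le> A" and "theta Q A g q \<noteq> 0"
  shows "fst q \<in> verts (stretched_quiver Q A)
    \<and> path_end (stretched_quiver Q A) q \<in> verts (stretched_quiver Q A)"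
proof -
  obtain p where p: "is_path Q p" "stretch_path A p = q"
    using theta_nonzeroD[OF assms(3)] by blast
  have start: "fst q = Old (fst p)" "fst p \<in> verts Q"
    using p by (auto simp: stretch_path_def is_path_def)
  have "path_end (stretched_quiver Q A) q \<in> verts (stretched_quiver Q A)"
  proof (cases "snd p = []")
    case True
    then have "q = (Old (fst p), [])"
      using p(2) by (simp add: stretch_path_def)
    then show ?thesis
      using start by (simp add: path_end_def stretched_quiver_def)
  next
    case False
    then have "snd q \<noteq> []" "last (snd q) = (last (snd p), A)"
      using p(2) assms(2) length_stretch_path[of A p] last_stretch_path[of p A] by auto
    moreover have "last (snd p) \<in> arrs Q"
      using False p(1) last_in_set by (auto simp: is_path_def)
    then have "tgt Q (last (snd p)) \<in> verts Q"
      using assms(1) by (simp add: finite_quiver_def)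
    ultimately show ?thesis
      by (simp add: path_end_def stretched_quiver_def)
  qed
  then show ?thesis
    using start by (simp add: stretched_quiver_def)
qed

lemma pa_rquot_theta:
  assumes "t \<noteq> []" and "snd (last t) \<noteq> A" and "1 \<le> A"
  shows "pa_rquot t (theta Q A g) = pa_zero"
proof
  fix r
  show "pa_rquot t (theta Q A g) r = pa_zero r"
  proof (rule ccontr)
    assume "pa_rquot t (theta Q A g) r \<noteq> pa_zero r"
    then obtain p where p: "stretch_path A p = (fst r, snd r @ t)"
      using theta_nonzeroD by (fastforce simp: pa_rquot_def pa_zero_def)
    then have "snd p \<noteq> []"
      using assms(1) length_stretch_path[of A p] by auto
    then show False
      using p assms last_stretch_path[of p A] by simp
  qed
qed

lemma pa_lquot_theta:
  assumes "fst p \<notin> range Old"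
  shows "pa_lquot Q' p (theta Q A g) = pa_zero"
proof -
  have "theta Q A g (fst p, l) = 0" for l
  proof (rule ccontr)
    assume "theta Q A g (fst p, l) \<noteq> 0"
    then obtain p' where "stretch_path A p' = (fst p, l)"
      using theta_nonzeroD by blast
    then have "fst p = Old (fst p')"
      by (auto simp: stretch_path_def)
    then show False
      using assms by blast
  qed
  then show ?thesis
    by (intro ext) (simp add: pa_lquot_def pa_zero_def)
qed

lemma path_end_qtil:
  "i < A \<Longrightarrow> path_end (stretched_quiver Q A) (qtil Q A (New al i)) = Old (tgt Q al)"
  by (simp add: path_end_def stretched_quiver_def last_map del: upt_Suc)

lemma qtil_suffix:
  assumes "k < A - i"
  shows "(path_end (stretched_quiver Q A)
            (fst (qtil Q A (New al i)), take k (snd (qtil Q A (New al i)))),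
          drop k (snd (qtil Q A (New al i)))) = qtil Q A (New al (i + k))"
proof -
  have "path_end (stretched_quiver Q A) (New al i, take k (map (\<lambda>j. (al, j)) [i + 1..<A + 1]))
      = New al (i + k)"
  proof (cases k)
    case (Suc k')
    then have "last (take k (map (\<lambda>j. (al, j)) [i + 1..<A + 1])) = (al, i + k)"
      using assms last_take_Suc[of k' "map (\<lambda>j. (al, j)) [i + 1..<A + 1]"] by (simp del: upt_Suc)
    then show ?thesis
      using assms Suc by (auto simp: path_end_def stretched_quiver_def simp del: upt_Suc)
  qed (simp add: path_end_def)
  then show ?thesis
    by (simp add: drop_map drop_upt add.assoc del: upt_Suc)
qed

locale stretched_algebra =
  fixes Q :: "('v, 'e) quiver" and A :: nat and G :: "('v, 'e, 'k::field) pelem set"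
  assumes finite_quiver: "finite_quiver Q"
    and A_pos: "1 \<le> A"
    and gens_vanish_on_vertices: "g \<in> G \<Longrightarrow> g (v, []) = 0"
begin

abbreviation S where "S \<equiv> stretched_quiver Q A"
abbreviation J where "J \<equiv> stretched_ideal Q A G"

lemma finite_verts_S: "finite (verts S)"
proof -
  have "{New a j | a j. a \<in> arrs Q \<and> 1 \<le> j \<and> j \<le> A - 1} \<subseteq> (\<lambda>(a, j). New a j) ` (arrs Q \<times> {..A})"
    by auto
  moreover have "finite (arrs Q \<times> {..A})" "finite (verts Q)"
    using finite_quiver by (auto simp: finite_quiver_def)
  ultimately have "finite {New a j | a j. a \<in> arrs Q \<and> 1 \<le> j \<and> j \<le> A - 1}"
    using finite_subset finite_imageI by blast
  then show ?thesis
    using \<open>finite (verts Q)\<close> by (simp add: stretched_quiver_def)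
qed

lemma tgt_in_verts_S: "\<forall>b\<in>arrs S. tgt S b \<in> verts S"
  using finite_quiver by (auto simp: stretched_quiver_def finite_quiver_def)

lemma stretched_ideal_vanishes_short:
  assumes "f \<in> J" and "length (snd q) < A"
  shows "f q = 0"
proof -
  have "theta Q A g q = 0" if "g \<in> G" and "length (snd q) < A" for g q
    using that by (simp add: theta_vanishes_short gens_vanish_on_vertices)
  then have "\<forall>s\<in>theta Q A ` G. \<forall>q. length (snd q) < A \<longrightarrow> s q = 0"
    by blast
  from gen_ideal_vanishes_short[OF this assms(1)[unfolded stretched_ideal_def]] show ?thesis
    using assms(2) by blast
qed

lemma stretched_ideal_endpoints_in_verts:
  assumes "f \<in> J" and "f q \<noteq> 0"
  shows "fst q \<in> verts S \<and> path_end S q \<in> verts S"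
proof -
  have "\<forall>s\<in>theta Q A ` G. \<forall>q. s q \<noteq> 0 \<longrightarrow> fst q \<in> verts S \<and> path_end S q \<in> verts S"
    using theta_endpoints_in_verts[OF finite_quiver A_pos] by blast
  from gen_ideal_endpoints_in_verts[OF tgt_in_verts_S this assms(1)[unfolded stretched_ideal_def]]
  show ?thesis
    using assms(2) by blast
qed

lemma stretched_ideal_mult_left: "x \<in> pa_carrier S \<Longrightarrow> f \<in> J \<Longrightarrow> pa_mult S x f \<in> J"
  using gen_ideal_mult_left[OF finite_verts_S, of x f "theta Q A ` G"]
    stretched_ideal_endpoints_in_verts[of f]
  unfolding stretched_ideal_def by blast

lemma stretched_ideal_mult_right: "f \<in> J \<Longrightarrow> y \<in> pa_carrier S \<Longrightarrow> pa_mult S f y \<in> J"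
  using gen_ideal_mult_right[OF finite_verts_S, of y f "theta Q A ` G"]
    stretched_ideal_endpoints_in_verts[of f]
  unfolding stretched_ideal_def by blast

lemma stretched_ideal_rquot:
  assumes "f \<in> J" and "length t \<le> A" and "\<forall>b\<in>set t. snd b \<noteq> A"
  shows "pa_rquot t f \<in> J"
  using assms(1)[unfolded stretched_ideal_def] assms(2,3)
proof (induction arbitrary: t rule: gen_ideal.induct)
  case (gen s)
  show ?case
  proof (cases "t = []")
    case True
    then show ?thesis
      using gen.hyps by (simp add: pa_rquot_def stretched_ideal_def gen_ideal.gen)
  next
    case False
    moreover have "snd (last t) \<noteq> A"
      using False gen.prems(2) last_in_set by blast
    ultimately have "pa_rquot t s = pa_zero"
      using gen.hyps A_pos pa_rquot_theta by blast
    then show ?thesis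
      by (simp add: stretched_ideal_def gen_ideal.zero)
  qed
next
  case zero
  then show ?case
    using gen_ideal.zero by (simp add: stretched_ideal_def pa_rquot_def pa_zero_def)
next
  case (add a b)
  have "pa_rquot t (pa_add a b) = pa_add (pa_rquot t a) (pa_rquot t b)"
    by (simp add: pa_rquot_def pa_add_def)
  then show ?case
    using add.IH add.prems by (simp add: stretched_ideal_def gen_ideal.add)
next
  case (smult a c)
  have "pa_rquot t (pa_smult c a) = pa_smult c (pa_rquot t a)"
    by (simp add: pa_rquot_def pa_smult_def)
  then show ?case
    using smult.IH smult.prems by (simp add: stretched_ideal_def gen_ideal.smult)
next
  case (mult a x y)
  have a: "a \<in> J"
    using mult.hyps(1) by (simp add: stretched_ideal_def)
  have head: "pa_mult S (pa_mult S x a) (pa_rquot t y) \<in> J"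
    using gen_ideal.mult[OF mult.hyps(1,2) pa_rquot_carrier[OF mult.hyps(3)]]
    by (simp add: stretched_ideal_def)
  have "pa_rquot (take (Suc m) t) (pa_mult S x a) \<in> J" if "m < length t" for m
  proof -
    \<comment> \<open>a has no paths shorter than A, so the whole prefix of t is divided off a\<close>
    have "pa_rquot (take (Suc m) t) (pa_mult S x a) = pa_mult S x (pa_rquot (take (Suc m) t) a)"
      using stretched_ideal_vanishes_short[OF a] mult.prems(1) that
      by (intro pa_rquot_pa_mult_short) auto
    moreover have "pa_rquot (take (Suc m) t) a \<in> J"
      using mult.prems by (intro mult.IH) (auto dest: in_set_takeD)
    ultimately show ?thesis
      using stretched_ideal_mult_left[OF mult.hyps(2)] by simp
  qed
  then have tail: "(\<lambda>r. \<Sum>m<length t. y (tgt S (t ! m), drop (Suc m) t)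
      * pa_rquot (take (Suc m) t) (pa_mult S x a) r) \<in> J"
    unfolding stretched_ideal_def by (intro gen_ideal_sum) simp
  show ?case
    using head tail unfolding stretched_ideal_def pa_rquot_pa_mult[of t S "pa_mult S x a" y]
    by (rule gen_ideal.add)
qed

lemma stretched_ideal_lquot:
  assumes "f \<in> J" and al: "al \<in> arrs Q" and "1 \<le> i" and "i < A"
  shows "pa_lquot S (qtil Q A (New al i)) f \<in> J"
  using assms(1)[unfolded stretched_ideal_def] assms(3,4)
proof (induction arbitrary: i rule: gen_ideal.induct)
  case (gen s)
  then have "pa_lquot S (qtil Q A (New al i)) s = pa_zero"
    by (auto intro: pa_lquot_theta)
  then show ?case
    by (simp add: stretched_ideal_def gen_ideal.zero)
next
  case zero
  then show ?case
    using gen_ideal.zero by (simp add: stretched_ideal_def pa_lquot_def pa_zero_def)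
next
  case (add a b)
  have "pa_lquot S q (pa_add a b) = pa_add (pa_lquot S q a) (pa_lquot S q b)" for q
    by (auto simp: pa_lquot_def pa_add_def)
  then show ?case
    using add.IH add.prems by (simp add: stretched_ideal_def gen_ideal.add)
next
  case (smult a c)
  have "pa_lquot S q (pa_smult c a) = pa_smult c (pa_lquot S q a)" for q
    by (auto simp: pa_lquot_def pa_smult_def)
  then show ?case
    using smult.IH smult.prems by (simp add: stretched_ideal_def gen_ideal.smult)
next
  case (mult a x y)
  let ?q = "qtil Q A (New al i)"
  have a: "a \<in> J"
    using mult.hyps(1) by (simp add: stretched_ideal_def)
  have "Old (tgt Q al) \<in> verts S"
    using al finite_quiver by (simp add: stretched_quiver_def finite_quiver_def)
  then have "pa_lquot S ?q x \<in> pa_carrier S"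
    using pa_lquot_carrier[OF mult.hyps(2)] path_end_qtil[OF mult.prems(2)] by metis
  then have "pa_mult S (pa_lquot S ?q x) a \<in> J"
    using stretched_ideal_mult_left[OF _ a] by blast
  moreover have "(\<lambda>r. \<Sum>k<length (snd ?q). x (fst ?q, take k (snd ?q))
      * pa_lquot S (path_end S (fst ?q, take k (snd ?q)), drop k (snd ?q)) a r) \<in> J"
    unfolding stretched_ideal_def
  proof (intro gen_ideal_sum)
    fix k assume "k < length (snd ?q)"
    then have k: "k < A - i"
      by (simp del: upt_Suc)
    then have "pa_lquot S (qtil Q A (New al (i + k))) a \<in> J"
      using mult.prems by (intro mult.IH) auto
    then show "pa_lquot S (path_end S (fst ?q, take k (snd ?q)), drop k (snd ?q)) a
        \<in> gen_ideal S (theta Q A ` G)"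
      unfolding qtil_suffix[OF k] stretched_ideal_def .
  qed
  ultimately have "pa_lquot S ?q (pa_mult S x a) \<in> J"
    unfolding stretched_ideal_def pa_lquot_pa_mult[of S ?q x a] by (rule gen_ideal.add)
  \<comment> \<open>x a has no paths shorter than A, so q~_w is divided off x a alone\<close>
  moreover have
    "pa_lquot S ?q (pa_mult S (pa_mult S x a) y) = pa_mult S (pa_lquot S ?q (pa_mult S x a)) y"
    using stretched_ideal_vanishes_short[OF stretched_ideal_mult_left[OF mult.hyps(2) a]]
    by (intro pa_lquot_pa_mult_short) simp
  ultimately show ?case
    using stretched_ideal_mult_right[OF _ mult.hyps(3)] by simp
qed

end

theorem proposition1p10:
  fixes Q :: "('v, 'e) quiver" and A :: nat
    and G I :: "('v, 'e, 'k::field) pelem set"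
    and w :: "('v, 'e) svert"
    and x :: "(('v, 'e) svert, 'e \<times> nat, 'k) pelem"
  assumes "finite_quiver Q"
    and "admissible Q I"
    and "fin_dim_quot Q I"
    and "minimal_uniform_gens Q G I"
    and "A \<ge> 1"
    and "w \<in> verts (stretched_quiver Q A)" and "w \<notin> Old ` verts Q"
    and "x \<in> pa_carrier (stretched_quiver Q A)"
  shows "(pa_mult (stretched_quiver Q A) x (pa_vtx (fst (ptil Q A w)))
            \<notin> stretched_ideal Q A G
          \<longrightarrow> pa_mult (stretched_quiver Q A) x (pa_path (ptil Q A w))
            \<notin> stretched_ideal Q A G)
       \<and> (pa_mult (stretched_quiver Q A) (pa_vtx (path_end (stretched_quiver Q A) (qtil Q A w))) x
            \<notin> stretched_ideal Q A G
          \<longrightarrow> pa_mult (stretched_quiver Q A) (pa_path (qtil Q A w)) x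
            \<notin> stretched_ideal Q A G)"
proof -
  obtain al i where w: "w = New al i" and al: "al \<in> arrs Q" and i: "1 \<le> i" "i < A"
    using assms(5-7) by (auto simp: stretched_quiver_def)
  have "g (v, []) = 0" if "g \<in> G" for g v
  proof -
    have "g \<in> I"
      using assms(4) that gen_ideal.gen by (auto simp: minimal_uniform_gens_def)
    then show ?thesis
      using assms(2) by (auto simp: admissible_def)
  qed
  then interpret stretched_algebra Q A G
    using assms(1,5) by unfold_locales auto
  have "pa_mult S x (pa_vtx (fst (ptil Q A w))) \<in> J" if "pa_mult S x (pa_path (ptil Q A w)) \<in> J"
    using stretched_ideal_rquot[OF that, of "snd (ptil Q A w)"] i
    by (simp add: w pa_rquot_mult_pa_path del: upt_Suc)
  moreover have "pa_mult S (pa_vtx (path_end S (qtil Q A w))) x \<in> J"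
    if "pa_mult S (pa_path (qtil Q A w)) x \<in> J"
    using stretched_ideal_lquot[OF that[unfolded w] al i] by (simp add: w pa_lquot_pa_path_mult)
  ultimately show ?thesis
    by blast
qed

end
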